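(* Let $f:\mathbb{R}^n\times\mathbb{R}^m\to\mathbb{R}$ and $h:\mathbb{R}^m\to\mathbb{R}$. Let $U\subseteq\mathbb{R}^n$ be open and let $y:U\to\mathbb{R}^m$ satisfy $y(x)\in\operatorname{argmin}_{u\in\mathbb{R}^m} f(x,u)$ subject to $h(u)=0$ for every $x\in U$. Fix $x_0\in U$, write $y_0=y(x_0)$, and assume $f$ is twice continuously differentiable near $(x_0,y_0)$, $h$ is twice continuously differentiable near $y_0$, $y$ is continuous at $x_0$, and $D_Y h(y_0)\neq 0$. Let $$a=(D_Y h(y_0))^\top\in\mathbb{R}^m,\quad B=D^2_{XY}f(x_0,y_0)\in\mathbb{R}^{m\times n},\quad \lambda=\Big(\tfrac{\partial h}{\partial y_i}(y_0)\Big)^{-1}\tfrac{\partial f}{\partial y_i}(x_0,y_0)$$ for any index $i$ with $\frac{\partial h}{\partial y_i}(y_0)\neq 0$ (this value does not depend on the choice of $i$), and $H=D^2_{YY}f(x_0,y_0)-\lambda D^2_{YY}h(y_0)$. If $H$ is non-singular and $a^\top H^{-1}a\neq 0$, then $y$ is differentiable at $x_0$ and $$Dy(x_0)=\left(\frac{H^{-1}aa^\top H^{-1}}{a^\top H^{-1}a}-H^{-1}\right)B.$$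
   Context: Derivative conventions: Jacobians $Dg$ of $g:\mathbb{R}^n\to\mathbb{R}^k$ are $k\times n$ matrices; for scalar-valued functions they are row vectors. $D_X, D_Y$ are partial Jacobians with respect to the first/second argument; $D^2_{YY} f = D_Y (D_Y f)^{\top}$, $D^2_{XY} f = D_X (D_Y f)^{\top}\in\mathbb{R}^{m\times n}$. *)

theory Defs
  imports "HOL-Analysis.Analysis"
begin

definition C1_on :: "'a::real_normed_vector set \<Rightarrow> ('a \<Rightarrow> 'b::real_normed_vector) \<Rightarrow> bool" where
  "C1_on S g \<longleftrightarrow> (\<exists>g'. (\<forall>x\<in>S. (g has_derivative blinfun_apply (g' x)) (at x)) \<and> continuous_on S g')"

definition C2_on :: "'a::real_normed_vector set \<Rightarrow> ('a \<Rightarrow> 'b::real_normed_vector) \<Rightarrow> bool" where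
  "C2_on S g \<longleftrightarrow> (\<exists>g'. (\<forall>x\<in>S. (g has_derivative blinfun_apply (g' x)) (at x)) \<and> C1_on S g')"

definition C2_near :: "('a::real_normed_vector \<Rightarrow> 'b::real_normed_vector) \<Rightarrow> 'a \<Rightarrow> bool" where
  "C2_near g p \<longleftrightarrow> (\<exists>S. open S \<and> p \<in> S \<and> C2_on S g)"

definition grad :: "(real^'m \<Rightarrow> real) \<Rightarrow> real^'m \<Rightarrow> real^'m" where
  "grad g u = (\<chi> i. frechet_derivative g (at u) (axis i 1))"

definition outer :: "real^'m \<Rightarrow> real^'k \<Rightarrow> real^'k^'m" where
  "outer a b = (columnvector a :: real^1^'m) ** rowvector b"

end

theory Submission
  imports Defs
begin

text \<open>
  Because each y x minimises f x on the level set h = 0 and grad h does not vanish near y x0,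
  the first-order (Lagrange) condition grad (f x) (y x) = \<mu> x grad h (y x) holds near x0
  with a continuous multiplier \<mu>. It is proved with the intermediate value theorem: moving from
  y x along a tangent direction of the constraint and correcting along the normal finds feasible
  points, so the gradient of f x has no tangential component.
  Thus x \<mapsto> (y x, \<mu> x) is a continuous solution of the system
  G (x, u, \<lambda>) = (grad (f x) u - \<lambda> grad h u, h u) = 0. Its derivative in (u, \<lambda>) is the
  bordered matrix [H, -a; a', 0], which is injective when H is invertible and a' H^-1 a \<noteq> 0.
  Differentiating the identity (only continuity of y is needed, not the existence part of the
  implicit function theorem) shows that y is differentiable, and solving the bordered system
  gives the stated formula for Dy x0.
\<close>

lemma grad_of_has_derivative:
  fixes g :: "real^'m \<Rightarrow> real"
  assumes "(g has_derivative D) (at u)"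
  shows "grad g u = (\<chi> j. D (axis j 1))"
  unfolding grad_def frechet_derivative_at[OF assms] ..

lemma has_derivative_grad:
  fixes g :: "real^'m \<Rightarrow> real"
  assumes "(g has_derivative D) (at u)"
  shows "(g has_derivative (\<lambda>w. grad g u \<bullet> w)) (at u)"
proof -
  have "D w = grad g u \<bullet> w" for w
  proof -
    have "D w = D (\<Sum>j\<in>UNIV. w$j *\<^sub>R axis j 1)"
      using basis_expansion[of w] by (simp add: scalar_mult_eq_scaleR)
    also have "\<dots> = (\<Sum>j\<in>UNIV. w$j * D (axis j 1))"
      using has_derivative_linear[OF assms] by (simp add: linear_sum linear_scale)
    also have "\<dots> = grad g u \<bullet> w"
      unfolding grad_of_has_derivative[OF assms] inner_vec_def by (simp add: mult.commute)
    finally show ?thesis .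
  qed
  then show ?thesis using assms by presburger
qed

lemma jacobian_mult_vector:
  fixes F :: "real^'a \<Rightarrow> real^'b"
  assumes "(F has_derivative F') (at x)"
  shows "jacobian F (at x) *v v = F' v"
  using matrix_vector_mul(3)[OF has_derivative_bounded_linear[OF assms]]
  unfolding jacobian_def frechet_derivative_at[OF assms, symmetric] by metis

lemma has_derivative_partial_fst:
  assumes "(F has_derivative F') (at (x, u))"
  shows "((\<lambda>v. F (v, u)) has_derivative (\<lambda>d. F' (d, 0))) (at x)"
  using has_derivative_compose[OF has_derivative_Pair[OF has_derivative_ident has_derivative_const] assms]
  by simp

lemma has_derivative_partial_snd:
  assumes "(F has_derivative F') (at (x, u))"
  shows "((\<lambda>v. F (x, v)) has_derivative (\<lambda>d. F' (0, d))) (at u)"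
  using has_derivative_compose[OF has_derivative_Pair[OF has_derivative_const has_derivative_ident] assms]
  by simp

lemma has_derivative_blinfun_columns:
  fixes F' :: "'a::real_normed_vector \<Rightarrow> 'b::real_normed_vector \<Rightarrow>\<^sub>L real"
    and e :: "'m::finite \<Rightarrow> 'b"
  assumes "(F' has_derivative D) (at p)"
  shows "((\<lambda>q. \<chi> j. F' q (e j)) has_derivative (\<lambda>d. \<chi> j. D d (e j))) (at p)"
proof -
  have col: "((\<lambda>q. F' q (e j)) has_derivative (\<lambda>d. D d (e j))) (at p)" for j
    using bounded_bilinear.FDERIV[OF bounded_bilinear_blinfun_apply assms has_derivative_const]
    by simp
  have expand: "(\<chi> j. c j) = (\<Sum>j\<in>UNIV. c j *\<^sub>R axis j (1::real))" for c :: "'m \<Rightarrow> real"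
    using basis_expansion[of "\<chi> j. c j"] by (simp add: scalar_mult_eq_scaleR)
  show ?thesis
    unfolding expand by (intro has_derivative_sum has_derivative_scaleR_left col)
qed

lemma C2_near_grad:
  fixes h :: "real^'m \<Rightarrow> real"
  assumes "C2_near h u0"
  obtains S D where "open S" "u0 \<in> S"
    and "\<And>u. u \<in> S \<Longrightarrow> (h has_derivative (\<lambda>w. grad h u \<bullet> w)) (at u)"
    and "(grad h has_derivative D) (at u0)"
proof -
  obtain S h' D where S: "open S" "u0 \<in> S"
    and dh: "\<And>u. u \<in> S \<Longrightarrow> (h has_derivative blinfun_apply (h' u)) (at u)"
    and dh': "(h' has_derivative D) (at u0)"
    using assms unfolding C2_near_def C2_on_def C1_on_def by blast
  have "((\<lambda>u. \<chi> j. h' u (axis j 1)) has_derivative (\<lambda>d. \<chi> j. D d (axis j 1))) (at u0)"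
    by (rule has_derivative_blinfun_columns[OF dh'])
  then have "(grad h has_derivative (\<lambda>d. \<chi> j. D d (axis j 1))) (at u0)"
    by (rule has_derivative_transform_within_open[OF _ S]) (simp add: grad_of_has_derivative[OF dh])
  with S dh that show thesis by (blast intro: has_derivative_grad)
qed

lemma C2_near_partial_grad:
  fixes f :: "'a::real_normed_vector \<Rightarrow> real^'m \<Rightarrow> real"
  assumes "C2_near (\<lambda>(x, u). f x u) (x0, u0)"
  obtains S D where "open S" "(x0, u0) \<in> S"
    and "\<And>x u. (x, u) \<in> S \<Longrightarrow> (f x has_derivative (\<lambda>w. grad (f x) u \<bullet> w)) (at u)"
    and "((\<lambda>(x, u). grad (f x) u) has_derivative D) (at (x0, u0))"
proof -
  obtain S F' D where S: "open S" "(x0, u0) \<in> S"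
    and dF: "\<And>p. p \<in> S \<Longrightarrow> ((\<lambda>(x, u). f x u) has_derivative blinfun_apply (F' p)) (at p)"
    and dF': "(F' has_derivative D) (at (x0, u0))"
    using assms unfolding C2_near_def C2_on_def C1_on_def by blast
  have df: "(f x has_derivative (\<lambda>w. F' (x, u) (0, w))) (at u)" if "(x, u) \<in> S" for x u
    using has_derivative_partial_snd[OF dF[OF that]] by simp
  have "((\<lambda>p. \<chi> j. F' p (0, axis j 1)) has_derivative (\<lambda>d. \<chi> j. D d (0, axis j 1))) (at (x0, u0))"
    by (rule has_derivative_blinfun_columns[OF dF'])
  then have "((\<lambda>(x, u). grad (f x) u) has_derivative (\<lambda>d. \<chi> j. D d (0, axis j 1))) (at (x0, u0))"
    by (rule has_derivative_transform_within_open[OF _ S]) (auto simp: grad_of_has_derivative[OF df])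
  with S df that show thesis by (blast intro: has_derivative_grad)
qed

lemma outer_mult_vector: "outer a b *v w = (b \<bullet> w) *\<^sub>R (a::real^'m)"
  by (simp add: outer_def vec_eq_iff matrix_vector_mult_def matrix_matrix_mult_def
      columnvector_def rowvector_def inner_vec_def sum_distrib_left sum_distrib_right algebra_simps)

lemma invertible_matrix_inv:
  fixes A :: "'a::semiring_1^'n^'m"
  assumes "invertible A"
  shows "A ** matrix_inv A = mat 1" and "matrix_inv A ** A = mat 1"
proof -
  have "\<exists>A'. A ** A' = mat 1 \<and> A' ** A = mat 1" using assms unfolding invertible_def by blast
  from someI_ex[OF this] show "A ** matrix_inv A = mat 1" "matrix_inv A ** A = mat 1"
    unfolding matrix_inv_def by auto
qed

lemma invertible_matrix_inv_mult_vector: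
  fixes A :: "real^'n^'n"
  assumes "invertible A"
  shows "A *v (matrix_inv A *v w) = w" and "matrix_inv A *v (A *v w) = w"
  using invertible_matrix_inv[OF assms] by (simp_all add: matrix_vector_mul_assoc)

lemma bordered_system_solution:
  fixes H :: "real^'m^'m" and B :: "real^'n^'m"
  assumes "invertible H" and aHa: "a \<bullet> (matrix_inv H *v a) \<noteq> 0"
  defines "Y \<equiv> ((1 / (a \<bullet> (matrix_inv H *v a))) *\<^sub>R (matrix_inv H ** outer a a ** matrix_inv H)
                  - matrix_inv H) ** B"
  shows "H *v (Y *v v) + B *v v = (a \<bullet> (matrix_inv H *v (B *v v)) / (a \<bullet> (matrix_inv H *v a))) *\<^sub>R a"
    and "a \<bullet> (Y *v v) = 0"
proof -
  let ?Hi = "matrix_inv H"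
  define \<mu> where "\<mu> = a \<bullet> (?Hi *v (B *v v)) / (a \<bullet> (?Hi *v a))"
  have Y: "Y *v v = \<mu> *\<^sub>R (?Hi *v a) - ?Hi *v (B *v v)"
    by (simp add: Y_def \<mu>_def matrix_vector_mul_assoc[symmetric] matrix_vector_mult_diff_rdistrib
        scaleR_matrix_vector_assoc[symmetric] outer_mult_vector matrix_vector_mult_scaleR)
  show "H *v (Y *v v) + B *v v = \<mu> *\<^sub>R a"
    by (simp add: Y matrix_vector_mult_diff_distrib matrix_vector_mult_scaleR
        invertible_matrix_inv_mult_vector[OF assms(1)])
  show "a \<bullet> (Y *v v) = 0"
    using aHa by (simp add: Y \<mu>_def inner_diff_right)
qed

lemma bordered_system_injective:
  fixes H :: "real^'m^'m"
  assumes "invertible H" and "a \<bullet> (matrix_inv H *v a) \<noteq> 0"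
    and Hw: "H *v w = c *\<^sub>R a" and aw: "a \<bullet> w = 0"
  shows "w = 0" and "c = 0"
proof -
  have w: "w = c *\<^sub>R (matrix_inv H *v a)"
    using arg_cong[OF Hw, of "(*v) (matrix_inv H)"]
    by (simp add: matrix_vector_mult_scaleR invertible_matrix_inv_mult_vector[OF assms(1)])
  with aw assms(2) show "c = 0" by simp
  with w show "w = 0" by simp
qed

lemma norm_add_scaleR_sgn_le:
  assumes "0 \<le> t"
  shows "norm (t *\<^sub>R v + s *\<^sub>R sgn a) \<le> t * norm v + \<bar>s\<bar>"
  using norm_triangle_ineq[of "t *\<^sub>R v" "s *\<^sub>R sgn a"] assms by (cases "a = 0") (auto simp: norm_sgn)

lemma constraint_sign_change_across_line:
  fixes h :: "'a::real_inner \<Rightarrow> real"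
  assumes dh: "(h has_derivative (\<lambda>w. a \<bullet> w)) (at u0)" and h0: "h u0 = 0" and "a \<noteq> 0"
    and av: "a \<bullet> v = 0" and S: "open S" "u0 \<in> S" and \<eta>: "\<eta> > 0"
  obtains \<delta> where "\<delta> > 0"
    and "\<And>t s. 0 < t \<Longrightarrow> t < \<delta> \<Longrightarrow> \<bar>s\<bar> \<le> \<eta> * t \<Longrightarrow> u0 + t *\<^sub>R v + s *\<^sub>R sgn a \<in> S"
    and "\<And>t. 0 < t \<Longrightarrow> t < \<delta> \<Longrightarrow>
           h (u0 + t *\<^sub>R v + (- (\<eta> * t)) *\<^sub>R sgn a) \<le> 0 \<and> 0 \<le> h (u0 + t *\<^sub>R v + (\<eta> * t) *\<^sub>R sgn a)"
proof -
  define \<alpha> where "\<alpha> = norm a"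
  define N where "N = norm v + \<eta>"
  have \<alpha>: "\<alpha> > 0" using \<open>a \<noteq> 0\<close> by (simp add: \<alpha>_def)
  have N: "N > 0" using \<eta> by (simp add: N_def add_nonneg_pos)
  obtain d where d: "d > 0"
    and dh': "\<And>u. norm (u - u0) < d \<Longrightarrow> \<bar>h u - a \<bullet> (u - u0)\<bar> \<le> \<alpha> * \<eta> / (2 * N) * norm (u - u0)"
  proof -
    have "\<alpha> * \<eta> / (2 * N) > 0" using \<alpha> \<eta> N by simp
    with dh show thesis using that unfolding has_derivative_at_alt h0 by (metis real_norm_def diff_zero)
  qed
  obtain r where r: "r > 0" "ball u0 r \<subseteq> S" using S open_contains_ball by blast
  have near: "norm (u0 + t *\<^sub>R v + s *\<^sub>R sgn a - u0) \<le> t * N" "t * N < min d r"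
    if "0 < t" "t < min d r / N" "\<bar>s\<bar> \<le> \<eta> * t" for t s
    using norm_add_scaleR_sgn_le[of t v s a] that N by (auto simp: N_def algebra_simps field_simps)
  have approx: "\<bar>h (u0 + t *\<^sub>R v + s *\<^sub>R sgn a) - s * \<alpha>\<bar> \<le> \<alpha> * \<eta> * t / 2"
    if "0 < t" "t < min d r / N" "\<bar>s\<bar> \<le> \<eta> * t" for t s
  proof -
    let ?p = "u0 + t *\<^sub>R v + s *\<^sub>R sgn a"
    have "a \<bullet> (?p - u0) = s * \<alpha>"
      using av \<open>a \<noteq> 0\<close> by (simp add: \<alpha>_def sgn_div_norm inner_add_right
          power2_norm_eq_inner[symmetric] power2_eq_square)
    then have "\<bar>h ?p - s * \<alpha>\<bar> \<le> \<alpha> * \<eta> / (2 * N) * norm (?p - u0)"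
      using dh'[of ?p] near[OF that] by simp
    also have "\<dots> \<le> \<alpha> * \<eta> / (2 * N) * (t * N)"
      using near[OF that] \<alpha> \<eta> N by (intro mult_left_mono) auto
    also have "\<dots> = \<alpha> * \<eta> * t / 2" using N by (simp add: field_simps)
    finally show ?thesis .
  qed
  show thesis
  proof (rule that[of "min d r / N"])
    show "min d r / N > 0" using d r N by simp
    fix t assume t: "0 < t" "t < min d r / N"
    show "u0 + t *\<^sub>R v + s *\<^sub>R sgn a \<in> S" if "\<bar>s\<bar> \<le> \<eta> * t" for s
    proof -
      have "dist (u0 + t *\<^sub>R v + s *\<^sub>R sgn a) u0 < r"
        using near[OF t that] unfolding dist_norm by linarith
      then have "u0 + t *\<^sub>R v + s *\<^sub>R sgn a \<in> ball u0 r" by (simp add: dist_commute)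
      with r show ?thesis by blast
    qed
    have "\<alpha> * \<eta> * t > 0" using \<alpha> \<eta> t by simp
    moreover have "\<eta> * t * \<alpha> = \<alpha> * \<eta> * t" by simp
    moreover have "\<bar>-(\<eta> * t)\<bar> \<le> \<eta> * t" "\<bar>\<eta> * t\<bar> \<le> \<eta> * t" using \<eta> t by auto
    ultimately show "h (u0 + t *\<^sub>R v + (- (\<eta> * t)) *\<^sub>R sgn a) \<le> 0 \<and> 0 \<le> h (u0 + t *\<^sub>R v + (\<eta> * t) *\<^sub>R sgn a)"
      using approx[OF t, of "-(\<eta> * t)"] approx[OF t, of "\<eta> * t"] unfolding abs_le_iff by simp
  qed
qed

lemma constraint_zero_near_line:
  fixes h :: "'a::real_inner \<Rightarrow> real"
  assumes dh: "(h has_derivative (\<lambda>w. a \<bullet> w)) (at u0)" and h0: "h u0 = 0" and "a \<noteq> 0"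
    and av: "a \<bullet> v = 0" and S: "open S" "u0 \<in> S" and hS: "continuous_on S h" and \<eta>: "\<eta> > 0"
  obtains \<delta> where "\<delta> > 0"
    and "\<And>t. 0 < t \<Longrightarrow> t < \<delta> \<Longrightarrow> \<exists>s. \<bar>s\<bar> \<le> \<eta> * t \<and> h (u0 + t *\<^sub>R v + s *\<^sub>R sgn a) = 0"
proof -
  obtain \<delta> where \<delta>: "\<delta> > 0"
    and inS: "\<And>t s. 0 < t \<Longrightarrow> t < \<delta> \<Longrightarrow> \<bar>s\<bar> \<le> \<eta> * t \<Longrightarrow> u0 + t *\<^sub>R v + s *\<^sub>R sgn a \<in> S"
    and sign: "\<And>t. 0 < t \<Longrightarrow> t < \<delta> \<Longrightarrow>
           h (u0 + t *\<^sub>R v + (- (\<eta> * t)) *\<^sub>R sgn a) \<le> 0 \<and> 0 \<le> h (u0 + t *\<^sub>R v + (\<eta> * t) *\<^sub>R sgn a)"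
    using constraint_sign_change_across_line[OF dh h0 \<open>a \<noteq> 0\<close> av S \<eta>] by blast
  show thesis
  proof (rule that[OF \<delta>])
    fix t assume t: "0 < t" "t < \<delta>"
    define p where "p s = u0 + t *\<^sub>R v + s *\<^sub>R sgn a" for s
    have "continuous_on {-(\<eta> * t)..\<eta> * t} p" unfolding p_def by (intro continuous_intros)
    moreover have "p ` {-(\<eta> * t)..\<eta> * t} \<subseteq> S" using inS[OF t] by (auto simp: p_def)
    ultimately have "continuous_on {-(\<eta> * t)..\<eta> * t} (h \<circ> p)"
      using continuous_on_compose continuous_on_subset[OF hS] by blast
    moreover have "-(\<eta> * t) \<le> \<eta> * t" using \<eta> t by simp
    ultimately obtain s where "-(\<eta> * t) \<le> s" "s \<le> \<eta> * t" "h (p s) = 0"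
      using IVT'[of "h \<circ> p" "-(\<eta> * t)" 0 "\<eta> * t"] sign[OF t] by (auto simp: p_def)
    then show "\<exists>s. \<bar>s\<bar> \<le> \<eta> * t \<and> h (u0 + t *\<^sub>R v + s *\<^sub>R sgn a) = 0"
      unfolding p_def by (intro exI[of _ s]) auto
  qed
qed

lemma constrained_min_directional:
  fixes \<phi> h :: "'a::real_inner \<Rightarrow> real"
  assumes d\<phi>: "(\<phi> has_derivative (\<lambda>w. g \<bullet> w)) (at u0)"
    and dh: "(h has_derivative (\<lambda>w. a \<bullet> w)) (at u0)" and h0: "h u0 = 0" and "a \<noteq> 0"
    and S: "open S" "u0 \<in> S" and hS: "continuous_on S h"
    and min: "\<And>u. h u = 0 \<Longrightarrow> \<phi> u0 \<le> \<phi> u"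
    and av: "a \<bullet> v = 0"
  shows "0 \<le> g \<bullet> v"
proof (rule ccontr)
  \<comment> \<open>Otherwise the feasible points u0 + t v + s sgn a with \<bar>s\<bar> \<le> \<eta> t beat u0 for small t.\<close>
  assume "\<not> 0 \<le> g \<bullet> v"
  define c where "c = - (g \<bullet> v)"
  define \<eta> where "\<eta> = c / (4 * (norm g + 1))"
  define N where "N = norm v + \<eta>"
  have c: "c > 0" using \<open>\<not> 0 \<le> g \<bullet> v\<close> by (simp add: c_def)
  have \<eta>: "\<eta> > 0" using c unfolding \<eta>_def by (intro divide_pos_pos mult_pos_pos) (auto simp: add_nonneg_pos)
  have N: "N > 0" using \<eta> by (simp add: N_def add_nonneg_pos)
  obtain d where d: "d > 0"
    and d\<phi>': "\<And>u. norm (u - u0) < d \<Longrightarrow> \<bar>\<phi> u - \<phi> u0 - g \<bullet> (u - u0)\<bar> \<le> c / (4 * N) * norm (u - u0)"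
  proof -
    have "c / (4 * N) > 0" using c N by simp
    with d\<phi> show thesis using that unfolding has_derivative_at_alt by (metis real_norm_def)
  qed
  obtain \<delta> where \<delta>: "\<delta> > 0"
    and zero: "\<And>t. 0 < t \<Longrightarrow> t < \<delta> \<Longrightarrow> \<exists>s. \<bar>s\<bar> \<le> \<eta> * t \<and> h (u0 + t *\<^sub>R v + s *\<^sub>R sgn a) = 0"
    using constraint_zero_near_line[OF dh h0 \<open>a \<noteq> 0\<close> av S hS \<eta>] by blast
  define t where "t = min \<delta> (d / N) / 2"
  have t: "0 < t" "t < \<delta>" using \<delta> d N by (auto simp: t_def)
  have "t \<le> d / N / 2" by (simp add: t_def)
  then have tN: "t * N < d" using d N by (simp add: field_simps)
  obtain s where s: "\<bar>s\<bar> \<le> \<eta> * t" and hp: "h (u0 + t *\<^sub>R v + s *\<^sub>R sgn a) = 0"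
    using zero[OF t(1,2)] by blast
  define p where "p = u0 + t *\<^sub>R v + s *\<^sub>R sgn a"
  have np: "norm (p - u0) \<le> t * N"
    using norm_add_scaleR_sgn_le[of t v s a] s t by (simp add: p_def N_def algebra_simps)
  have "\<bar>g \<bullet> sgn a\<bar> \<le> norm g + 1"
    using Cauchy_Schwarz_ineq2[of g "sgn a"] \<open>a \<noteq> 0\<close> by (simp add: norm_sgn)
  then have "s * (g \<bullet> sgn a) \<le> \<bar>s\<bar> * (norm g + 1)"
    by (metis abs_ge_self abs_ge_zero abs_mult mult_left_mono order_trans)
  also have "\<dots> \<le> \<eta> * t * (norm g + 1)" using s by (simp add: mult_right_mono add_nonneg_pos)
  also have "\<dots> = c / 4 * t"
    using norm_ge_zero[of g] by (simp add: \<eta>_def field_simps del: norm_ge_zero)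
  finally have gs: "s * (g \<bullet> sgn a) \<le> c / 4 * t" .
  have "\<phi> p - \<phi> u0 \<le> g \<bullet> (p - u0) + c / (4 * N) * norm (p - u0)"
    using d\<phi>'[of p] np tN by (simp add: abs_le_iff)
  also have "g \<bullet> (p - u0) = - (c * t) + s * (g \<bullet> sgn a)"
    by (simp add: p_def c_def inner_add_right)
  also have "c / (4 * N) * norm (p - u0) \<le> c / 4 * t"
    using mult_left_mono[OF np, of "c / (4 * N)"] c N by (simp add: field_simps)
  finally have "\<phi> p - \<phi> u0 \<le> - (c * t) + s * (g \<bullet> sgn a) + c / 4 * t" by simp
  moreover have "\<phi> u0 \<le> \<phi> p" using min hp by (simp add: p_def)
  moreover have "c / 4 * t > 0" using t c by simp
  ultimately show False using gs by (simp add: field_simps)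
qed

lemma constrained_min_gradient_parallel:
  fixes \<phi> h :: "'a::real_inner \<Rightarrow> real"
  assumes d\<phi>: "(\<phi> has_derivative (\<lambda>w. g \<bullet> w)) (at u0)"
    and dh: "(h has_derivative (\<lambda>w. a \<bullet> w)) (at u0)" and h0: "h u0 = 0" and "a \<noteq> 0"
    and S: "open S" "u0 \<in> S" and hS: "continuous_on S h"
    and min: "\<And>u. h u = 0 \<Longrightarrow> \<phi> u0 \<le> \<phi> u"
  shows "g = (g \<bullet> a / (a \<bullet> a)) *\<^sub>R a"
proof -
  define w where "w = g - (g \<bullet> a / (a \<bullet> a)) *\<^sub>R a"
  have aw: "a \<bullet> w = 0" "a \<bullet> - w = 0"
    using \<open>a \<noteq> 0\<close> by (simp_all add: w_def inner_diff_right inner_commute)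
  have "g \<bullet> w = 0"
    using constrained_min_directional[OF assms aw(1)] constrained_min_directional[OF assms aw(2)]
    by simp
  then have "w \<bullet> w = 0" using aw(1) by (simp add: w_def inner_diff_left inner_commute)
  then show ?thesis by (simp add: w_def)
qed

lemma linearization_small_along_zero_set:
  fixes G :: "'a::real_normed_vector \<times> 'b::real_normed_vector \<Rightarrow> 'c::real_normed_vector"
  assumes dG: "(G has_derivative G') (at (x0, z x0))"
    and zero: "\<forall>\<^sub>F x in nhds x0. G (x, z x) = 0"
    and z: "isCont z x0" and e: "e > 0"
  shows "\<forall>\<^sub>F x in nhds x0. norm (G' (x - x0, z x - z x0)) \<le> e * (norm (x - x0) + norm (z x - z x0))"
proof -
  obtain d where d: "d > 0" and dG': "\<And>q. norm (q - (x0, z x0)) < d \<Longrightarrow>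
      norm (G q - G (x0, z x0) - G' (q - (x0, z x0))) \<le> e * norm (q - (x0, z x0))"
    using dG e unfolding has_derivative_at_alt by meson
  have "isCont (\<lambda>x. (x, z x)) x0" using z by (intro continuous_intros)
  then have "\<forall>\<^sub>F x in nhds x0. dist (x, z x) (x0, z x0) < d"
    using d unfolding isCont_def by (auto dest: tendstoD simp: eventually_nhds_conv_at)
  with zero show ?thesis
  proof eventually_elim
    case (elim x)
    have "G (x0, z x0) = 0" using eventually_nhds_x_imp_x[OF zero] by simp
    with elim dG'[of "(x, z x)"]
    have "norm (G' (x - x0, z x - z x0)) \<le> e * norm (x - x0, z x - z x0)"
      by (simp add: dist_norm)
    also have "\<dots> \<le> e * (norm (x - x0) + norm (z x - z x0))"
      using e norm_Pair_le by (intro mult_left_mono) auto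
    finally show ?case .
  qed
qed

lemma implicit_function_has_derivative:
  fixes G :: "'a::euclidean_space \<times> 'b::euclidean_space \<Rightarrow> 'c::euclidean_space"
  assumes dG: "(G has_derivative G') (at (x0, z x0))"
    and zero: "\<forall>\<^sub>F x in nhds x0. G (x, z x) = 0"
    and z: "isCont z x0" and L: "linear L"
    and GL: "\<And>v. G' (v, L v) = 0"
    and inj: "\<And>w. G' (0, w) = 0 \<Longrightarrow> w = 0"
  shows "(z has_derivative L) (at x0)"
proof -
  have G': "bounded_linear G'" using dG by (rule has_derivative_bounded_linear)
  have "bounded_linear (\<lambda>w. G' (0, w))"
    using bounded_linear_compose[OF G' bounded_linear_Pair[OF bounded_linear_zero bounded_linear_ident]] .
  then obtain c where c: "c > 0" and cw: "\<And>w. c * norm w \<le> norm (G' (0, w))"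
    using injective_imp_isometric[of UNIV "\<lambda>w. G' (0, w)"] inj by auto
  have bL: "bounded_linear L" using L linear_conv_bounded_linear by blast
  obtain K where K: "K > 0" and KL: "\<And>v. norm (L v) \<le> norm v * K"
    using bounded_linear.pos_bounded[OF bL] by blast
  have "\<forall>\<^sub>F x in nhds x0. norm (z x - z x0 - L (x - x0)) \<le> e * norm (x - x0)" if e: "e > 0" for e
  proof -
    define e' where "e' = min (c / 2) (c * e / (2 * (1 + K)))"
    have e': "e' > 0" "e' \<le> c / 2" using c e K unfolding e'_def by (simp, linarith)
    have "e' * (1 + K) \<le> c * e / (2 * (1 + K)) * (1 + K)"
      using K by (intro mult_right_mono) (auto simp: e'_def)
    also have "\<dots> = c * e / 2" using K by (simp add: field_simps)
    finally have e'K: "e' * (1 + K) \<le> c * e / 2" .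
    show ?thesis
      using linearization_small_along_zero_set[OF dG zero z e'(1)]
    proof eventually_elim
      case (elim x)
      define dx where "dx = x - x0"
      define dz where "dz = z x - z x0"
      define r where "r = dz - L dx"
      have "G' (dx, dz) = G' (dx, L dx) + G' (0, r)"
        using linear_add[OF bounded_linear.linear[OF G'], of "(dx, L dx)" "(0, r)"] by (simp add: r_def)
      then have "c * norm r \<le> e' * (norm dx + norm dz)"
        using cw[of r] elim GL by (simp add: dx_def dz_def)
      also have "\<dots> \<le> e' * (norm dx + norm dx * K + norm r)"
        using e' KL[of dx] norm_triangle_ineq[of "L dx" r] by (intro mult_left_mono) (auto simp: r_def)
      also have "\<dots> = e' * (1 + K) * norm dx + e' * norm r" by (simp add: algebra_simps)
      also have "\<dots> \<le> c * e / 2 * norm dx + c / 2 * norm r"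
        using e' e'K by (intro add_mono mult_right_mono) auto
      finally have "norm r \<le> e * norm dx" using c by (simp add: field_simps)
      then show ?case by (simp add: r_def dx_def dz_def)
    qed
  qed
  then show ?thesis
    unfolding has_derivative_at_alt eventually_nhds_metric using bL
    by (metis dist_norm)
qed

lemma lagrange_map_has_derivative:
  fixes P :: "'a::real_normed_vector \<times> 'b::real_normed_vector \<Rightarrow> 'c::real_normed_vector"
    and g :: "'b \<Rightarrow> 'c" and h :: "'b \<Rightarrow> real"
  assumes dP: "(P has_derivative P') (at (x, u))" and dg: "(g has_derivative g') (at u)"
    and dh: "(h has_derivative h') (at u)"
  shows "((\<lambda>q. (P (fst q, fst (snd q)) - snd (snd q) *\<^sub>R g (fst (snd q)), h (fst (snd q))))
          has_derivative (\<lambda>d. (P' (fst d, fst (snd d)) - (l *\<^sub>R g' (fst (snd d)) + snd (snd d) *\<^sub>R g u),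
                               h' (fst (snd d))))) (at (x, u, l))"
proof -
  have pr: "((\<lambda>q. (fst q, fst (snd q))) has_derivative (\<lambda>d. (fst d, fst (snd d)))) (at q)"
    "((\<lambda>q. fst (snd q)) has_derivative (\<lambda>d. fst (snd d))) (at q)"
    for q :: "'a \<times> 'b \<times> real"
    by (auto intro!: derivative_eq_intros)
  have "((\<lambda>q. P (fst q, fst (snd q))) has_derivative (\<lambda>d. P' (fst d, fst (snd d)))) (at (x, u, l))"
    using has_derivative_compose[OF pr(1), of P P'] dP by simp
  moreover have "((\<lambda>q. g (fst (snd q))) has_derivative (\<lambda>d. g' (fst (snd d)))) (at (x, u, l))"
    using has_derivative_compose[OF pr(2), of g g'] dg by simp
  moreover have "((\<lambda>q. h (fst (snd q))) has_derivative (\<lambda>d. h' (fst (snd d)))) (at (x, u, l))"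
    using has_derivative_compose[OF pr(2), of h h'] dh by simp
  ultimately show ?thesis by (auto intro!: derivative_eq_intros)
qed

lemma lagrange_system_solution_has_derivative:
  fixes P :: "(real^'n) \<times> (real^'m) \<Rightarrow> real^'m" and g :: "real^'m \<Rightarrow> real^'m"
    and h :: "real^'m \<Rightarrow> real" and y :: "real^'n \<Rightarrow> real^'m" and \<mu> :: "real^'n \<Rightarrow> real"
  assumes dP: "(P has_derivative P') (at (x0, y x0))"
    and dg: "(g has_derivative g') (at (y x0))" and a: "g (y x0) = a"
    and dh: "(h has_derivative (\<lambda>w. a \<bullet> w)) (at (y x0))"
    and system: "\<forall>\<^sub>F x in nhds x0. P (x, y x) = \<mu> x *\<^sub>R g (y x) \<and> h (y x) = 0"
    and y: "isCont y x0" and \<mu>: "isCont \<mu> x0"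
    and H: "\<And>w. H *v w = P' (0, w) - \<mu> x0 *\<^sub>R g' w"
    and B: "\<And>v. B *v v = P' (v, 0)"
    and H_inv: "invertible H" and aHa: "a \<bullet> (matrix_inv H *v a) \<noteq> 0"
  shows "(y has_derivative (\<lambda>v. (((1 / (a \<bullet> (matrix_inv H *v a))) *\<^sub>R
            (matrix_inv H ** outer a a ** matrix_inv H) - matrix_inv H) ** B) *v v)) (at x0)"
proof -
  define Y where "Y = ((1 / (a \<bullet> (matrix_inv H *v a))) *\<^sub>R
            (matrix_inv H ** outer a a ** matrix_inv H) - matrix_inv H) ** B"
  define \<nu> where "\<nu> v = a \<bullet> (matrix_inv H *v (B *v v)) / (a \<bullet> (matrix_inv H *v a))" for v
  define G where "G q = (P (fst q, fst (snd q)) - snd (snd q) *\<^sub>R g (fst (snd q)), h (fst (snd q)))"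
    for q :: "(real^'n) \<times> (real^'m) \<times> real"
  define G' where "G' d = (P' (fst d, fst (snd d)) - (\<mu> x0 *\<^sub>R g' (fst (snd d)) + snd (snd d) *\<^sub>R a),
      a \<bullet> fst (snd d))" for d :: "(real^'n) \<times> (real^'m) \<times> real"
  have P'_split: "P' (v, w) = B *v v + (H *v w + \<mu> x0 *\<^sub>R g' w)" for v w
    using linear_add[OF has_derivative_linear[OF dP], of "(v, 0)" "(0, w)"] by (simp add: B H)
  have "(G has_derivative G') (at (x0, y x0, \<mu> x0))"
    using lagrange_map_has_derivative[OF dP dg dh, of "\<mu> x0"]
    unfolding G_def[abs_def] G'_def[abs_def] a .
  moreover have "\<forall>\<^sub>F x in nhds x0. G (x, y x, \<mu> x) = 0"
    using system by eventually_elim (simp add: G_def zero_prod_def)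
  moreover have "isCont (\<lambda>x. (y x, \<mu> x)) x0" using y \<mu> by (intro continuous_intros)
  moreover have "linear (\<lambda>v. (Y *v v, \<nu> v))"
    by (intro linearI) (auto simp: \<nu>_def matrix_vector_right_distrib matrix_vector_mult_scaleR
        inner_add_right add_divide_distrib)
  moreover have "G' (v, Y *v v, \<nu> v) = 0" for v
    using bordered_system_solution[OF H_inv aHa, of B v]
    by (simp add: G'_def P'_split Y_def \<nu>_def zero_prod_def algebra_simps)
  moreover have "w = 0" if "G' (0, w) = 0" for w
    using that bordered_system_injective[OF H_inv aHa, of "fst w" "snd w"]
    by (cases w) (simp add: G'_def P'_split zero_prod_def algebra_simps)
  ultimately have "((\<lambda>x. (y x, \<mu> x)) has_derivative (\<lambda>v. (Y *v v, \<nu> v))) (at x0)"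
    by (intro implicit_function_has_derivative[where G = G and G' = G']) auto
  from has_derivative_fst[OF this] show ?thesis by (simp add: Y_def)
qed

lemma lagrange_multiplier_near:
  fixes f :: "'a::t2_space \<Rightarrow> real^'m \<Rightarrow> real" and h :: "real^'m \<Rightarrow> real"
  assumes "open U" and argmin: "\<And>x. x \<in> U \<Longrightarrow> h (y x) = 0 \<and> (\<forall>u. h u = 0 \<longrightarrow> f x (y x) \<le> f x u)"
    and "x0 \<in> U" and y: "isCont y x0"
    and Sf: "open Sf" "(x0, y x0) \<in> Sf"
    and df: "\<And>x u. (x, u) \<in> Sf \<Longrightarrow> (f x has_derivative (\<lambda>w. grad (f x) u \<bullet> w)) (at u)"
    and grad_f: "isCont (\<lambda>(x, u). grad (f x) u) (x0, y x0)"
    and Sh: "open Sh" "y x0 \<in> Sh"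
    and dh: "\<And>u. u \<in> Sh \<Longrightarrow> (h has_derivative (\<lambda>w. grad h u \<bullet> w)) (at u)"
    and grad_h: "isCont (grad h) (y x0)" and "grad h (y x0) \<noteq> 0"
  obtains \<mu> where "isCont \<mu> x0"
    and "\<forall>\<^sub>F x in nhds x0. grad (f x) (y x) = \<mu> x *\<^sub>R grad h (y x) \<and> h (y x) = 0"
proof
  define \<mu> where "\<mu> x = grad (f x) (y x) \<bullet> grad h (y x) / (grad h (y x) \<bullet> grad h (y x))" for x
  have graph: "isCont (\<lambda>x. (x, y x)) x0" using y by (intro continuous_intros)
  have grad_h_y: "isCont (\<lambda>x. grad h (y x)) x0" using isCont_o2[OF y grad_h] .
  have "isCont (\<lambda>x. grad (f x) (y x)) x0" using isCont_o2[OF graph grad_f] by simp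
  then show "isCont \<mu> x0"
    unfolding \<mu>_def using grad_h_y \<open>grad h (y x0) \<noteq> 0\<close> by (intro continuous_intros) auto
  have h_cont: "continuous_on Sh h"
    using dh by (meson continuous_at_imp_continuous_on has_derivative_continuous)
  have "\<forall>\<^sub>F x in nhds x0. (x, y x) \<in> Sf"
    using graph Sf by (simp add: isCont_def tendsto_def eventually_nhds_conv_at)
  moreover have "\<forall>\<^sub>F x in nhds x0. y x \<in> Sh"
    using y Sh by (simp add: isCont_def tendsto_def eventually_nhds_conv_at)
  moreover have "\<forall>\<^sub>F x in nhds x0. x \<in> U" using eventually_nhds_in_open[OF \<open>open U\<close> \<open>x0 \<in> U\<close>] .
  moreover have "\<forall>\<^sub>F x in nhds x0. grad h (y x) \<noteq> 0"
    using tendsto_imp_eventually_ne[OF grad_h_y[unfolded isCont_def]] \<open>grad h (y x0) \<noteq> 0\<close>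
    by (simp add: eventually_nhds_conv_at)
  ultimately show "\<forall>\<^sub>F x in nhds x0. grad (f x) (y x) = \<mu> x *\<^sub>R grad h (y x) \<and> h (y x) = 0"
  proof eventually_elim
    case (elim x)
    with argmin[OF elim(3)] show ?case
      unfolding \<mu>_def by (auto intro: constrained_min_gradient_parallel[OF df dh _ _ Sh(1) _ h_cont])
  qed
qed

theorem corollary1:
  fixes f :: "real^'n \<Rightarrow> real^'m \<Rightarrow> real"
    and h :: "real^'m \<Rightarrow> real"
    and U :: "(real^'n) set"
    and y :: "real^'n \<Rightarrow> real^'m"
    and x0 :: "real^'n"
    and i :: 'm
  assumes U_open: "open U"
    and argmin: "\<And>x. x \<in> U \<Longrightarrow> h (y x) = 0 \<and> (\<forall>u. h u = 0 \<longrightarrow> f x (y x) \<le> f x u)"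
    and x0U: "x0 \<in> U"
    and f_C2: "C2_near (\<lambda>(x, u). f x u) (x0, y x0)"
    and h_C2: "C2_near h (y x0)"
    and y_cont: "isCont y x0"
    and a_nz: "grad h (y x0) \<noteq> 0"
    and i_nz: "grad h (y x0) $ i \<noteq> 0"
    and H_inv: "invertible (jacobian (grad (f x0)) (at (y x0))
                 - ((grad (f x0) (y x0) $ i) / (grad h (y x0) $ i)) *\<^sub>R jacobian (grad h) (at (y x0)))"
    and aHa_nz: "grad h (y x0) \<bullet> (matrix_inv (jacobian (grad (f x0)) (at (y x0))
                 - ((grad (f x0) (y x0) $ i) / (grad h (y x0) $ i)) *\<^sub>R jacobian (grad h) (at (y x0)))
                 *v grad h (y x0)) \<noteq> 0"
  shows "let a = grad h (y x0);
             B = jacobian (\<lambda>x. grad (f x) (y x0)) (at x0);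
             lam = (grad (f x0) (y x0) $ i) / (grad h (y x0) $ i);
             H = jacobian (grad (f x0)) (at (y x0)) - lam *\<^sub>R jacobian (grad h) (at (y x0));
             Hi = matrix_inv H
         in (y has_derivative (\<lambda>v. ((((1 / (a \<bullet> (Hi *v a))) *\<^sub>R (Hi ** outer a a ** Hi)) - Hi) ** B) *v v))
              (at x0)"
proof -
  obtain Sf P' where Sf: "open Sf" "(x0, y x0) \<in> Sf"
    and df: "\<And>x u. (x, u) \<in> Sf \<Longrightarrow> (f x has_derivative (\<lambda>w. grad (f x) u \<bullet> w)) (at u)"
    and dP: "((\<lambda>(x, u). grad (f x) u) has_derivative P') (at (x0, y x0))"
    using C2_near_partial_grad[OF f_C2] by blast
  obtain Sh g' where Sh: "open Sh" "y x0 \<in> Sh"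
    and dh: "\<And>u. u \<in> Sh \<Longrightarrow> (h has_derivative (\<lambda>w. grad h u \<bullet> w)) (at u)"
    and dg: "(grad h has_derivative g') (at (y x0))"
    using C2_near_grad[OF h_C2] by blast
  obtain \<mu> where \<mu>_cont: "isCont \<mu> x0"
    and system: "\<forall>\<^sub>F x in nhds x0. grad (f x) (y x) = \<mu> x *\<^sub>R grad h (y x) \<and> h (y x) = 0"
    using lagrange_multiplier_near[OF U_open _ x0U y_cont Sf _ has_derivative_continuous[OF dP] Sh _
        has_derivative_continuous[OF dg] a_nz] argmin df dh by blast
  from eventually_nhds_x_imp_x[OF system]
  have "grad (f x0) (y x0) $ i = \<mu> x0 * grad h (y x0) $ i" by simp
  then have \<mu>0: "\<mu> x0 = grad (f x0) (y x0) $ i / grad h (y x0) $ i" using i_nz by simp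
  show ?thesis
    unfolding Let_def
  proof (rule lagrange_system_solution_has_derivative[OF dP dg refl _ _ y_cont \<mu>_cont _ _ H_inv aHa_nz])
    show "(h has_derivative (\<bullet>) (grad h (y x0))) (at (y x0))" using dh Sh(2) .
    show "\<forall>\<^sub>F x in nhds x0. (\<lambda>(x, u). grad (f x) u) (x, y x) = \<mu> x *\<^sub>R grad h (y x) \<and> h (y x) = 0"
      using system by simp
    show "(jacobian (grad (f x0)) (at (y x0)) - (grad (f x0) (y x0) $ i / grad h (y x0) $ i) *\<^sub>R
        jacobian (grad h) (at (y x0))) *v w = P' (0, w) - \<mu> x0 *\<^sub>R g' w" for w
      using jacobian_mult_vector[OF has_derivative_partial_snd[OF dP]] jacobian_mult_vector[OF dg]
      by (simp add: \<mu>0 matrix_vector_mult_diff_rdistrib scaleR_matrix_vector_assoc[symmetric])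
    show "jacobian (\<lambda>x. grad (f x) (y x0)) (at x0) *v v = P' (v, 0)" for v
      using jacobian_mult_vector[OF has_derivative_partial_fst[OF dP]] by simp
  qed
qed

end
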